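(* Let $x_0\in X^{b_0^\star}_{++}$ and $v(x)=\alpha\frac{\langle x,b_0^\star\rangle^{1-\gamma}}{1-\gamma}$ on $X^{b_0^\star}_{++}$. Then $$\lim_{k\in\mathbb N,\,k\to\infty}e^{-\rho k}v\big(x^{x_0,c}(k)\big)=0\quad\text{for every }c\in\mathcal A^{b_0^\star}_{++}(x_0)\text{ with }\mathcal J(c)>-\infty.$$
   Context: $X$ is either $L^p(D,\mu)$, $p\in[1,\infty)$, $\mu$ $\sigma$-finite, or $C(D)$ (sup-norm, pointwise order) for compact metric $D$ with Borel measure $\mu$; $X^\star$ dual, $\langle\cdot,\cdot\rangle$ pairing, $X_+$ nonnegative cone, $X^\star_{++}$ the functionals strictly positive on nonzero elements of $X_+$, $X^{b_0^\star}_{++}=\{f:\langle f,b_0^\star\rangle>0\}$. $L$ is closed, densely defined, generates a $C_0$-semigroup on $X$ preserving strict positivity; $L^\star$ its adjoint. $(Nz)(\theta)=\eta(\theta)z(\theta)$; $\eta,f:D\to(0,\infty)$ measurable; $\gamma\in(0,1)\cup(1,\infty)$; $\rho>0$. Assumptions: there exist $b_0^\star\in X^\star_{++}\cap D(L^\star)$, $\lambda_0^\star\in\mathbb R$ with $L^\star b_0^\star=\lambda_0^\star b_0^\star$; $\rho>\lambda_0^\star(1-\gamma)$; if $\gamma>1$, $(b_0^\star)^{1-\gamma}/f\in L^\infty$; if $X=C(D)$, $b_0^\star$ is a measure absolutely continuous w.r.t. $\mu$ with density denoted $b_0^\star$ and $b_0^\star,\eta,f\in C(D;(0,\infty))$;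 if $X=L^p$, $\eta,f\in L^\infty(D;(0,\infty))$, $\int_Df^{1/\gamma}(\eta b_0^\star)^{\frac{\gamma-1}{\gamma}}d\mu<\infty$ and $\int_D(f/(\eta b_0^\star))^{p/\gamma}d\mu<\infty$. $\alpha=\gamma^\gamma\big(\int_Df^{1/\gamma}(\eta b_0^\star)^{\frac{\gamma-1}{\gamma}}d\mu/(\rho-\lambda_0^\star(1-\gamma))\big)^\gamma$. For $c\in L^1_{loc}(\mathbb R_+;X)$, $x^{x_0,c}(t)=e^{tL}x_0-\int_0^te^{(t-s)L}Nc(s)ds$; $\mathcal A^{b_0^\star}_{++}(x_0)=\{c\in L^1_{loc}(\mathbb R_+;X_+):\langle x^{x_0,c}(t),b_0^\star\rangle>0\ \forall t\ge0\}$; $\mathcal J(c)=\int_0^\infty e^{-\rho t}\int_D\frac{c(t)(\theta)^{1-\gamma}}{1-\gamma}f(\theta)\mu(d\theta)\,dt$. *)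

theory Defs
  imports "HOL-Analysis.Analysis"
begin

text \<open>Which of the two admissible function spaces X is: L^p(D,mu) or C(D).
  The domain D is represented as the carrier (space M) of the measure M = mu.\<close>
datatype space_kind = Lp real | Cont

definition qe :: "space_kind \<Rightarrow> 'd measure \<Rightarrow> ('d \<Rightarrow> bool) \<Rightarrow> bool" where
  "qe k M P = (case k of Lp p \<Rightarrow> (AE \<theta> in M. P \<theta>) | Cont \<Rightarrow> (\<forall>\<theta>\<in>space M. P \<theta>))"

text \<open>The Banach space type 'x is (via rep) isometrically, linearly isomorphic to
  L^p(D,mu) (p in [1,oo), mu sigma-finite) resp. to C(D) with sup-norm (D compact metric,
  mu a Borel measure on D).  rep x is a function representing the element x.\<close>
definition is_realization ::
  "space_kind \<Rightarrow> 'd::metric_space measure \<Rightarrow> ('x::real_normed_vector \<Rightarrow> 'd \<Rightarrow> real) \<Rightarrow> bool" where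
  "is_realization k M rep = (
     (\<forall>x y. qe k M (\<lambda>\<theta>. rep (x + y) \<theta> = rep x \<theta> + rep y \<theta>)) \<and>
     (\<forall>a x. qe k M (\<lambda>\<theta>. rep (a *\<^sub>R x) \<theta> = a * rep x \<theta>)) \<and>
     (\<forall>x y. qe k M (\<lambda>\<theta>. rep x \<theta> = rep y \<theta>) \<longrightarrow> x = y) \<and>
     (case k of
        Lp p \<Rightarrow> 1 \<le> p \<and> sigma_finite_measure M \<and>
          (\<forall>x. rep x \<in> borel_measurable M \<and> integrable M (\<lambda>\<theta>. \<bar>rep x \<theta>\<bar> powr p) \<and>
               norm x = (\<integral>\<theta>. \<bar>rep x \<theta>\<bar> powr p \<partial>M) powr (1 / p)) \<and>
          (\<forall>g \<in> borel_measurable M. integrable M (\<lambda>\<theta>. \<bar>g \<theta>\<bar> powr p) \<longrightarrow>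
               (\<exists>x. AE \<theta> in M. rep x \<theta> = g \<theta>))
      | Cont \<Rightarrow> compact (space M) \<and> sets M = sets (restrict_space borel (space M)) \<and>
          (\<forall>x. continuous_on (space M) (rep x) \<and>
               norm x = Sup (insert 0 ((\<lambda>\<theta>. \<bar>rep x \<theta>\<bar>) ` space M))) \<and>
          (\<forall>g. continuous_on (space M) g \<longrightarrow> (\<exists>x. \<forall>\<theta>\<in>space M. rep x \<theta> = g \<theta>))))"

definition Xplus :: "space_kind \<Rightarrow> 'd measure \<Rightarrow> ('x \<Rightarrow> 'd \<Rightarrow> real) \<Rightarrow> 'x set" where
  "Xplus k M rep = {x. qe k M (\<lambda>\<theta>. 0 \<le> rep x \<theta>)}"

definition Xstar_pp :: "space_kind \<Rightarrow> 'd measure \<Rightarrow> ('x::real_normed_vector \<Rightarrow> 'd \<Rightarrow> real) \<Rightarrow> ('x \<Rightarrow> real) set" where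
  "Xstar_pp k M rep = {b. bounded_linear b \<and> (\<forall>x \<in> Xplus k M rep. x \<noteq> 0 \<longrightarrow> 0 < b x)}"

definition generates_C0 :: "'x::real_normed_vector set \<Rightarrow> ('x \<Rightarrow> 'x) \<Rightarrow> (real \<Rightarrow> 'x \<Rightarrow> 'x) \<Rightarrow> bool" where
  "generates_C0 DL L T = (
     (\<forall>t\<ge>0. bounded_linear (T t)) \<and> T 0 = id \<and>
     (\<forall>s\<ge>0. \<forall>t\<ge>0. T (s + t) = T s \<circ> T t) \<and>
     (\<forall>x. ((\<lambda>t. T t x) \<longlongrightarrow> x) (at_right 0)) \<and>
     DL = {x. \<exists>y. ((\<lambda>h. (1 / h) *\<^sub>R (T h x - x)) \<longlongrightarrow> y) (at_right 0)} \<and>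
     (\<forall>x\<in>DL. ((\<lambda>h. (1 / h) *\<^sub>R (T h x - x)) \<longlongrightarrow> L x) (at_right 0)))"

definition loc_bochner :: "(real \<Rightarrow> 'x::real_normed_vector) \<Rightarrow> bool" where
  "loc_bochner c = (\<forall>T\<ge>0.
     (\<exists>s. (\<forall>n. simple_function (restrict_space lborel {0..T}) (s n)) \<and>
          (AE t in lborel. t \<in> {0..T} \<longrightarrow> (\<lambda>n. s n t) \<longlonglongrightarrow> c t)) \<and>
     (\<integral>\<^sup>+ t\<in>{0..T}. ennreal (norm (c t)) \<partial>lborel) < \<infinity>)"

definition mild :: "(real \<Rightarrow> 'x \<Rightarrow> 'x) \<Rightarrow> ('x \<Rightarrow> 'x) \<Rightarrow> 'x \<Rightarrow> (real \<Rightarrow> 'x) \<Rightarrow> real \<Rightarrow> 'x::real_normed_vector" where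
  "mild T Nop x0 c t = T t x0 - integral {0..t} (\<lambda>s. T (t - s) (Nop (c s)))"

definition adm :: "space_kind \<Rightarrow> 'd measure \<Rightarrow> ('x::real_normed_vector \<Rightarrow> 'd \<Rightarrow> real) \<Rightarrow>
    (real \<Rightarrow> 'x \<Rightarrow> 'x) \<Rightarrow> ('x \<Rightarrow> 'x) \<Rightarrow> ('x \<Rightarrow> real) \<Rightarrow> 'x \<Rightarrow> (real \<Rightarrow> 'x) set" where
  "adm k M rep T Nop b0 x0 = {c. loc_bochner c \<and> (\<forall>t\<ge>0. c t \<in> Xplus k M rep) \<and>
       (\<forall>t\<ge>0. 0 < b0 (mild T Nop x0 c t))}"

definition upow :: "real \<Rightarrow> real \<Rightarrow> ennreal" where
  "upow \<gamma> y = (if 0 < y then ennreal (y powr (1 - \<gamma>)) else if \<gamma> < 1 then 0 else \<infinity>)"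

text \<open>The functional J(c) in [-oo, oo]; the integrand has the constant sign of 1 - gamma.\<close>
definition Jfun :: "'d measure \<Rightarrow> ('x \<Rightarrow> 'd \<Rightarrow> real) \<Rightarrow> ('d \<Rightarrow> real) \<Rightarrow> real \<Rightarrow> real \<Rightarrow> (real \<Rightarrow> 'x) \<Rightarrow> ereal" where
  "Jfun M rep f \<rho> \<gamma> c = (if \<gamma> < 1 then 1 else -1) *
     enn2ereal (\<integral>\<^sup>+ t\<in>{0..}. (\<integral>\<^sup>+ \<theta>. ennreal (exp (- \<rho> * t) * f \<theta> / \<bar>1 - \<gamma>\<bar>) * upow \<gamma> (rep (c t) \<theta>) \<partial>M) \<partial>lborel)"

definition alpha :: "'d measure \<Rightarrow> ('d \<Rightarrow> real) \<Rightarrow> ('d \<Rightarrow> real) \<Rightarrow> ('d \<Rightarrow> real) \<Rightarrow> real \<Rightarrow> real \<Rightarrow> real \<Rightarrow> real" where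
  "alpha M f eta beta \<rho> lam0 \<gamma> = \<gamma> powr \<gamma> *
     ((\<integral>\<theta>. f \<theta> powr (1 / \<gamma>) * (eta \<theta> * beta \<theta>) powr ((\<gamma> - 1) / \<gamma>) \<partial>M) / (\<rho> - lam0 * (1 - \<gamma>))) powr \<gamma>"

text \<open>v(x) = alpha <x,b0>^{1-gamma}/(1-gamma), as a function of s = <x,b0> > 0.\<close>
definition vfun :: "real \<Rightarrow> real \<Rightarrow> real \<Rightarrow> real" where
  "vfun \<alpha> \<gamma> s = \<alpha> * s powr (1 - \<gamma>) / (1 - \<gamma>)"

end

theory Submission
  imports Defs
begin

text \<open>
  Since b0 is an eigenvector of the adjoint generator, <T t y, b0> = e^(lam0 t) <y, b0>: this is
  obtained by differentiating along orbits starting in the domain of L (local uniform bounds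
  on T come from the uniform boundedness principle) and extending by density. Hence
  S(t) = <x(t), b0> solves the scalar equation S' = lam0 S - B with B = <N c, b0> >= 0, that is
  S(t) = e^(lam0 t) X(t) with X(t) = S(0) - \<integral>[0,t] G and G(s) = e^(-lam0 s) B(s).
  Put delta = rho - lam0 (1 - gamma) > 0. For gamma < 1, S(t) <= e^(lam0 t) S(0) gives
  e^(-rho n) S(n)^(1-gamma) <= S(0)^(1-gamma) e^(-delta n).
  For gamma > 1 we need e^(-delta n) X(n)^(1-gamma) \<rightarrow> 0. Hoelder's inequality bounds
  \<integral> f c^(1-gamma) d\<mu> from below by K^gamma B^(1-gamma), K being the integral in alpha,
  so J(c) > -\<infinity> makes \<integral>[0,\<infinity>) e^(-delta s) G(s)^(1-gamma) ds finite; Hoelder on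
  [n, n+1], where \<integral> G <= X(n), bounds e^(-delta n) X(n)^(1-gamma) by e^delta times the tail of this integral.
\<close>

section \<open>Uniform boundedness and C0-semigroups\<close>

lemma Baire_closed_cover:
  fixes F :: "nat \<Rightarrow> 'a::banach set"
  assumes "\<And>m. closed (F m)" and "(\<Union>m. F m) = UNIV"
  shows "\<exists>m. interior (F m) \<noteq> {}"
proof (rule ccontr)
  assume "\<nexists>m. interior (F m) \<noteq> {}"
  then have "euclidean interior_of (\<Union>(range F)) = {}"
    using assms(1) by (intro Baire_category_alt)
      (auto simp: completely_metrizable_space_euclidean closed_closedin[symmetric])
  then show False using assms(2) by simp
qed

lemma uniform_boundedness:
  fixes A :: "'i \<Rightarrow> 'x::banach \<Rightarrow> 'y::real_normed_vector"
  assumes lin: "\<And>i. bounded_linear (A i)"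
    and pointwise: "\<And>z. \<exists>B. \<forall>i. norm (A i z) \<le> B"
  shows "\<exists>C. \<forall>i z. norm (A i z) \<le> C * norm z"
proof -
  define F where "F m = {z. \<forall>i. norm (A i z) \<le> real m}" for m :: nat
  have closed_F: "closed (F m)" for m
  proof -
    have "F m = (\<Inter>i. {z. norm (A i z) \<le> real m})" by (auto simp: F_def)
    moreover have "closed {z. norm (A i z) \<le> real m}" for i
      by (intro closed_Collect_le continuous_on_norm bounded_linear.continuous_on[OF lin]
          continuous_on_id continuous_on_const)
    ultimately show ?thesis by auto
  qed
  have "z \<in> (\<Union>m. F m)" for z
  proof -
    obtain B where B: "\<forall>i. norm (A i z) \<le> B" using pointwise by blast
    obtain m :: nat where "B \<le> real m" using real_arch_simple by blast
    then have "z \<in> F m" using B order_trans unfolding F_def by blast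
    then show ?thesis by blast
  qed
  then have "(\<Union>m. F m) = UNIV" by blast
  with closed_F have "\<exists>m. interior (F m) \<noteq> {}" by (rule Baire_closed_cover)
  then obtain m z0 r where r: "r > 0" "ball z0 r \<subseteq> F m"
    by (metis equals0I mem_interior)
  have "norm (A i z) \<le> (4 * real m / r) * norm z" for i z
  proof (cases "z = 0")
    case True
    then show ?thesis using linear_0[OF bounded_linear.linear[OF lin]] by simp
  next
    case False
    define u where "u = (r / (2 * norm z)) *\<^sub>R z"
    have "z0 + u \<in> F m" "z0 \<in> F m"
      using False r by (auto intro!: subsetD[OF r(2)] simp: u_def dist_norm)
    then have "norm (A i (z0 + u)) \<le> real m" "norm (A i z0) \<le> real m" by (auto simp: F_def)
    moreover have "A i u = A i (z0 + u) - A i z0"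
      using linear_add[OF bounded_linear.linear[OF lin]] by simp
    then have "norm (A i u) \<le> norm (A i (z0 + u)) + norm (A i z0)"
      by (simp add: norm_triangle_ineq4)
    ultimately have "norm (A i u) \<le> 2 * real m" by linarith
    moreover have "norm (A i z) = (2 * norm z / r) * norm (A i u)"
      using False r by (simp add: u_def linear_scale[OF bounded_linear.linear[OF lin]])
    ultimately have "norm (A i z) \<le> (2 * norm z / r) * (2 * real m)"
      using r by (metis mult_left_mono norm_ge_zero zero_le_divide_iff zero_le_mult_iff
          less_imp_le zero_le_numeral)
    then show ?thesis by (simp add: field_simps)
  qed
  then show ?thesis by blast
qed

locale c0_semigroup =
  fixes T :: "real \<Rightarrow> 'x::banach \<Rightarrow> 'x"
  assumes bounded_linear_T: "\<And>t. 0 \<le> t \<Longrightarrow> bounded_linear (T t)"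
    and T_0: "T 0 = id"
    and T_add: "\<And>s t. 0 \<le> s \<Longrightarrow> 0 \<le> t \<Longrightarrow> T (s + t) = T s \<circ> T t"
    and strongly_continuous: "\<And>x. ((\<lambda>t. T t x) \<longlongrightarrow> x) (at_right 0)"
begin

lemma T_diff: "0 \<le> t \<Longrightarrow> T t (x - y) = T t x - T t y"
  and T_scaleR: "0 \<le> t \<Longrightarrow> T t (a *\<^sub>R x) = a *\<^sub>R T t x"
  using bounded_linear_T by (simp_all add: linear_diff linear_scale bounded_linear.linear)

lemma T_add_apply: "0 \<le> s \<Longrightarrow> 0 \<le> t \<Longrightarrow> T (s + t) x = T s (T t x)"
  using T_add by simp

lemma norm_bounded_near_0: "\<exists>d>0. \<exists>C. \<forall>h\<in>{0..d}. \<forall>z. norm (T h z) \<le> C * norm z"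
proof (rule ccontr)
  assume no_bound: "\<not> ?thesis"
  have "\<forall>n::nat. \<exists>h z. h \<in> {0..1 / (real n + 1)} \<and> real n * norm z < norm (T h z)"
  proof
    fix n :: nat
    have "0 < 1 / (real n + 1)" by simp
    with no_bound have "\<not> (\<forall>h\<in>{0..1 / (real n + 1)}. \<forall>z. norm (T h z) \<le> real n * norm z)"
      by blast
    then show "\<exists>h z. h \<in> {0..1 / (real n + 1)} \<and> real n * norm z < norm (T h z)"
      by (auto simp: not_le)
  qed
  then obtain hs zs
    where "\<forall>n. hs n \<in> {0..1 / (real n + 1)} \<and> real n * norm (zs n) < norm (T (hs n) (zs n))"
    by metis
  then have hs: "\<And>n. hs n \<in> {0..1 / (real n + 1)}"
    and zs: "\<And>n. real n * norm (zs n) < norm (T (hs n) (zs n))"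
    by auto
  have "hs \<longlonglongrightarrow> 0"
    using hs by (intro tendsto_sandwich[OF _ _ tendsto_const LIMSEQ_inverse_real_of_nat_add])
      (auto simp: divide_inverse add.commute)
  have "\<exists>B. \<forall>n. norm (T (hs n) z) \<le> B" for z
  proof -
    have "continuous (at 0 within {0..}) (\<lambda>t. T t z)"
      using strongly_continuous T_0 by (simp add: continuous_within at_within_Ici_at_right)
    then have "(\<lambda>n. T (hs n) z) \<longlonglongrightarrow> T 0 z"
      using \<open>hs \<longlonglongrightarrow> 0\<close> hs unfolding continuous_within_sequentially o_def by auto
    then have "Bseq (\<lambda>n. T (hs n) z)" by (rule convergent_imp_Bseq[OF convergentI])
    then show ?thesis unfolding Bseq_def by blast
  qed
  moreover have "bounded_linear (T (hs n))" for n using hs bounded_linear_T by auto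
  ultimately have "\<exists>C. \<forall>n z. norm (T (hs n) z) \<le> C * norm z"
    by (rule uniform_boundedness[rotated])
  then obtain C where C: "\<And>n z. norm (T (hs n) z) \<le> C * norm z" by blast
  obtain n :: nat where "C \<le> real n" using real_arch_simple by blast
  then show False using C[of n "zs n"] zs[of n] mult_right_mono[of C "real n" "norm (zs n)"] by simp
qed

lemma norm_bounded_on_interval: "\<exists>C. \<forall>s\<in>{0..t}. \<forall>z. norm (T s z) \<le> C * norm z"
proof -
  obtain d C where d: "d > 0" and C: "\<And>h z. h \<in> {0..d} \<Longrightarrow> norm (T h z) \<le> C * norm z"
    using norm_bounded_near_0 by blast
  define C' where "C' = max 1 C"
  have C': "\<And>h z. h \<in> {0..d} \<Longrightarrow> norm (T h z) \<le> C' * norm z"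
    using C by (smt (verit) C'_def mult_right_mono norm_ge_zero)
  have "\<forall>s\<in>{0..real n * d}. \<forall>z. norm (T s z) \<le> C' ^ n * norm z" for n
  proof (induction n)
    case 0
    then show ?case using T_0 by simp
  next
    case (Suc n)
    show ?case
    proof (intro ballI allI)
      fix s z assume s: "s \<in> {0..real (Suc n) * d}"
      show "norm (T s z) \<le> C' ^ Suc n * norm z"
      proof (cases "s \<le> d")
        case True
        have "norm (T s z) \<le> C' * norm z" using C' s True by simp
        also have "\<dots> \<le> C' ^ Suc n * norm z"
          using power_increasing[of 1 "Suc n" C'] by (simp add: C'_def mult_right_mono)
        finally show ?thesis .
      next
        case False
        then have s_d: "s - d \<in> {0..real n * d}" using s by (auto simp: algebra_simps)
        have "norm (T s z) = norm (T d (T (s - d) z))" using T_add_apply[of d "s - d"] d s_d by simp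
        also have "\<dots> \<le> C' * norm (T (s - d) z)" using C' d by simp
        also have "\<dots> \<le> C' * (C' ^ n * norm z)"
          using Suc s_d by (intro mult_left_mono) (auto simp: C'_def)
        finally show ?thesis by simp
      qed
    qed
  qed
  moreover obtain n :: nat where "t / d \<le> real n" using real_arch_simple by blast
  then have "{0..t} \<subseteq> {0..real n * d}" using d by (auto simp: field_simps)
  ultimately show ?thesis by blast
qed

lemma T_left_tendsto_0:
  assumes t: "0 < t" and v: "(v \<longlongrightarrow> 0) (at_right 0)"
  shows "((\<lambda>h. T (t - h) (v h)) \<longlongrightarrow> 0) (at_right 0)"
proof -
  obtain C where C: "\<And>s z. s \<in> {0..t} \<Longrightarrow> norm (T s z) \<le> C * norm z"
    using norm_bounded_on_interval by blast
  have "\<forall>\<^sub>F h in at_right 0. 0 < h \<and> h < t"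
    using t by (simp add: eventually_at_right_field) (metis)
  then have "\<forall>\<^sub>F h in at_right 0. norm (T (t - h) (v h)) \<le> C * norm (v h)"
    by eventually_elim (simp add: C)
  then show ?thesis
    by (rule Lim_null_comparison) (rule tendsto_mult_right_zero[OF tendsto_norm_zero[OF v]])
qed

lemma orbit_left_tendsto:
  assumes t: "0 < t"
  shows "((\<lambda>h. T (t - h) x) \<longlongrightarrow> T t x) (at_right 0)"
proof -
  have "((\<lambda>h. T (t - h) (T h x - x)) \<longlongrightarrow> 0) (at_right 0)"
    using T_left_tendsto_0[OF t] strongly_continuous by (simp add: Lim_null[symmetric])
  then have "((\<lambda>h. T t x - T (t - h) (T h x - x)) \<longlongrightarrow> T t x) (at_right 0)"
    using tendsto_diff[OF tendsto_const] by fastforce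
  moreover have "\<forall>\<^sub>F h in at_right 0. T t x - T (t - h) (T h x - x) = T (t - h) x"
  proof -
    have "\<forall>\<^sub>F h in at_right 0. 0 < h \<and> h < t"
      using t by (simp add: eventually_at_right_field) (metis)
    then show ?thesis
      by eventually_elim (use T_add_apply[of "t - h" h for h] in \<open>auto simp: T_diff\<close>)
  qed
  ultimately show ?thesis by (rule Lim_transform_eventually)
qed

end

locale c0_generator =
  fixes DL :: "'x::banach set" and L :: "'x \<Rightarrow> 'x" and T :: "real \<Rightarrow> 'x \<Rightarrow> 'x"
  assumes generates: "generates_C0 DL L T"
begin

sublocale c0_semigroup T
  using generates unfolding generates_C0_def by (intro c0_semigroup.intro) simp_all

lemma domain_eq: "DL = {x. \<exists>y. ((\<lambda>h. (1 / h) *\<^sub>R (T h x - x)) \<longlongrightarrow> y) (at_right 0)}"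
  and generator_tendsto: "x \<in> DL \<Longrightarrow> ((\<lambda>h. (1 / h) *\<^sub>R (T h x - x)) \<longlongrightarrow> L x) (at_right 0)"
  using generates unfolding generates_C0_def by simp_all

lemma T_in_domain_and_commute:
  assumes x: "x \<in> DL" and t: "0 \<le> t"
  shows "T t x \<in> DL" "L (T t x) = T t (L x)"
proof -
  have "\<forall>\<^sub>F h in at_right 0. T t ((1 / h) *\<^sub>R (T h x - x)) = (1 / h) *\<^sub>R (T h (T t x) - T t x)"
    using eventually_at_right_less
  proof eventually_elim
    case (elim h)
    then show ?case
      using T_add_apply[of h t x] T_add_apply[of t h x] t by (simp add: T_diff T_scaleR add.commute)
  qed
  then have lim: "((\<lambda>h. (1 / h) *\<^sub>R (T h (T t x) - T t x)) \<longlongrightarrow> T t (L x)) (at_right 0)"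
    using bounded_linear.tendsto[OF bounded_linear_T[OF t] generator_tendsto[OF x]]
    by (rule Lim_transform_eventually[rotated])
  then show "T t x \<in> DL"
    unfolding domain_eq by blast
  then show "L (T t x) = T t (L x)"
    using generator_tendsto lim tendsto_unique trivial_limit_at_right_real by blast
qed

lemma orbit_difference_quotient:
  assumes x: "x \<in> DL" and t: "0 < t"
  shows "((\<lambda>s. (1 / (s - t)) *\<^sub>R (T s x - T t x)) \<longlongrightarrow> T t (L x)) (at t)"
proof (rule filterlim_split_at)
  have "((\<lambda>h. T t ((1 / h) *\<^sub>R (T h x - x))) \<longlongrightarrow> T t (L x)) (at_right 0)"
    using t by (intro bounded_linear.tendsto[OF bounded_linear_T generator_tendsto[OF x]]) simp
  moreover have "\<forall>\<^sub>F h in at_right 0. T t ((1 / h) *\<^sub>R (T h x - x)) = (1 / h) *\<^sub>R (T (h + t) x - T t x)"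
    using eventually_at_right_less
    by eventually_elim (use t T_add_apply[of t h x for h] in \<open>simp add: T_diff T_scaleR add.commute\<close>)
  ultimately show "((\<lambda>s. (1 / (s - t)) *\<^sub>R (T s x - T t x)) \<longlongrightarrow> T t (L x)) (at_right t)"
    unfolding filterlim_at_right_to_0[of _ _ t] by (simp add: Lim_transform_eventually)
next
  have "((\<lambda>h. T (t - h) ((1 / h) *\<^sub>R (T h x - x) - L x) + T (t - h) (L x)) \<longlongrightarrow> 0 + T t (L x)) (at_right 0)"
    using generator_tendsto[OF x] by (intro tendsto_add T_left_tendsto_0 orbit_left_tendsto t)
      (simp add: Lim_null[symmetric])
  moreover have "\<forall>\<^sub>F h in at_right 0.
      T (t - h) ((1 / h) *\<^sub>R (T h x - x) - L x) + T (t - h) (L x)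
      = (1 / - h) *\<^sub>R (T (t - h) x - T t x)"
  proof -
    have "\<forall>\<^sub>F h in at_right 0. 0 < h \<and> h < t"
      using t by (simp add: eventually_at_right_field) (metis)
    then show ?thesis
    proof eventually_elim
      case (elim h)
      then have "T t x = T (t - h) (T h x)" using T_add_apply[of "t - h" h x] by simp
      with elim show ?case by (simp add: T_diff T_scaleR scaleR_diff_right)
    qed
  qed
  ultimately show "((\<lambda>s. (1 / (s - t)) *\<^sub>R (T s x - T t x)) \<longlongrightarrow> T t (L x)) (at_left t)"
    unfolding filterlim_at_left_to_right filterlim_at_right_to_0[of _ _ "-t"]
    by (simp add: Lim_transform_eventually)
qed

lemma eigenfunctional_orbit_deriv:
  assumes b: "bounded_linear b" and eig: "\<And>x. x \<in> DL \<Longrightarrow> b (L x) = lam * b x"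
    and x: "x \<in> DL" and s: "0 < s"
  shows "DERIV (\<lambda>s. b (T s x)) s :> lam * b (T s x)"
proof -
  have "((\<lambda>y. b ((1 / (y - s)) *\<^sub>R (T y x - T s x))) \<longlongrightarrow> b (T s (L x))) (at s)"
    by (rule bounded_linear.tendsto[OF b orbit_difference_quotient[OF x s]])
  moreover have "b ((1 / (y - s)) *\<^sub>R (T y x - T s x)) = (b (T y x) - b (T s x)) / (y - s)" for y
    using b by (simp add: bounded_linear.linear linear_scale linear_diff divide_inverse mult.commute)
  moreover have "b (T s (L x)) = lam * b (T s x)"
    using T_in_domain_and_commute[OF x] eig s by (metis less_imp_le)
  ultimately show ?thesis by (simp add: has_field_derivative_iff)
qed

lemma eigenfunctional_T_on_domain:
  assumes b: "bounded_linear b" and eig: "\<And>x. x \<in> DL \<Longrightarrow> b (L x) = lam * b x"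
    and x: "x \<in> DL" and t: "0 \<le> t"
  shows "b (T t x) = exp (lam * t) * b x"
proof (cases "t = 0")
  case True
  then show ?thesis using T_0 by simp
next
  case False
  with t have t: "0 < t" by simp
  define g where "g s = exp (- lam * s) * b (T s x)" for s
  have deriv_orbit: "DERIV (\<lambda>s. b (T s x)) s :> lam * b (T s x)" if "0 < s" for s
    using b eig x that by (rule eigenfunctional_orbit_deriv)
  have "DERIV g s :> 0" if "0 < s" for s
    unfolding g_def using deriv_orbit[OF that]
    by (auto intro!: derivative_eq_intros simp: algebra_simps)
  moreover have "continuous_on {0..t} g"
  proof -
    have "continuous (at s within {0..t}) (\<lambda>s. b (T s x))" if "s \<in> {0..t}" for s
    proof (cases "s = 0")
      case True
      have "((\<lambda>s. b (T s x)) \<longlongrightarrow> b x) (at_right 0)"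
        by (rule bounded_linear.tendsto[OF b strongly_continuous])
      then show ?thesis
        using True t T_0 by (simp add: continuous_within at_within_Icc_at_right)
    next
      case False
      with that have "0 < s" by simp
      then have "isCont (\<lambda>s. b (T s x)) s" by (rule DERIV_isCont[OF deriv_orbit])
      then show ?thesis by (rule continuous_at_imp_continuous_at_within)
    qed
    then show ?thesis
      unfolding g_def by (intro continuous_intros) (simp add: continuous_on_eq_continuous_within)
  qed
  ultimately have "g t = g 0"
    using t by (auto intro: DERIV_isconst_end)
  then show ?thesis
    using T_0 by (simp add: g_def exp_minus field_simps)
qed

lemma eigenfunctional_T:
  assumes b: "bounded_linear b" and eig: "\<And>x. x \<in> DL \<Longrightarrow> b (L x) = lam * b x"
    and dense: "closure DL = UNIV" and t: "0 \<le> t"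
  shows "b (T t y) = exp (lam * t) * b y"
proof -
  have "closed {y. b (T t y) = exp (lam * t) * b y}"
    using linear_continuous_on[OF bounded_linear_compose[OF b bounded_linear_T[OF t]]]
      continuous_on_mult[OF continuous_on_const linear_continuous_on[OF b]]
    by (rule closed_Collect_eq)
  moreover have "DL \<subseteq> {y. b (T t y) = exp (lam * t) * b y}"
    using eigenfunctional_T_on_domain[OF b eig _ t] by blast
  ultimately have "closure DL \<subseteq> {y. b (T t y) = exp (lam * t) * b y}"
    by (rule closure_minimal[rotated])
  then show ?thesis using dense by auto
qed

end

section \<open>A reverse Hoelder inequality\<close>

lemma Young_inequality_scaled:
  fixes g l p q :: real
  assumes g: "1 < g" and l: "0 < l" and p: "0 < p" and q: "0 < q"
  shows "p powr (1 / g) * q powr ((g - 1) / g) \<le> l powr (1 - g) * p / g + (g - 1) / g * (l * q)"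
proof -
  have "(l powr (1 - g) * p) powr (1 / g) * (l * q) powr ((g - 1) / g)
      = (l powr ((1 - g) / g) * l powr ((g - 1) / g)) * (p powr (1 / g) * q powr ((g - 1) / g))"
    using l p q by (simp add: powr_mult powr_powr)
  also have "l powr ((1 - g) / g) * l powr ((g - 1) / g) = 1"
    using l by (simp add: powr_add[symmetric] add_divide_distrib[symmetric])
  finally have "p powr (1 / g) * q powr ((g - 1) / g)
      = (l powr (1 - g) * p) powr (1 / g) * (l * q) powr ((g - 1) / g)" by simp
  also have "\<dots> \<le> 1 / g * (l powr (1 - g) * p) + (g - 1) / g * (l * q)"
    using g l p q by (intro Youngs_inequality_0) (auto simp: diff_divide_distrib)
  finally show ?thesis by simp
qed

lemma upow_Young_inequality:
  fixes g l f w a :: real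
  assumes g: "1 < g" and l: "0 < l" and f: "0 < f" and w: "0 < w"
  shows "ennreal (f powr (1 / g) * w powr ((g - 1) / g))
    \<le> ennreal (l powr (1 - g) / g) * (ennreal f * upow g a) + ennreal ((g - 1) / g * l) * ennreal (w * a)"
proof (cases "0 < a")
  case True
  define A B where "A = l powr (1 - g) / g" and "B = (g - 1) / g * l"
  have A: "0 \<le> A" and B: "0 < B" using g l by (auto simp: A_def B_def)
  have "(f * a powr (1 - g)) powr (1 / g) * (w * a) powr ((g - 1) / g)
      = f powr (1 / g) * w powr ((g - 1) / g) * (a powr ((1 - g) / g) * a powr ((g - 1) / g))"
    using True f w by (simp add: powr_mult powr_powr)
  also have "a powr ((1 - g) / g) * a powr ((g - 1) / g) = 1"
    using True by (simp add: powr_add[symmetric] add_divide_distrib[symmetric])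
  finally have "f powr (1 / g) * w powr ((g - 1) / g)
      = (f * a powr (1 - g)) powr (1 / g) * (w * a) powr ((g - 1) / g)" by simp
  also have "\<dots> \<le> l powr (1 - g) * (f * a powr (1 - g)) / g + (g - 1) / g * (l * (w * a))"
    using g l f w True by (intro Young_inequality_scaled) auto
  finally have "ennreal (f powr (1 / g) * w powr ((g - 1) / g))
      \<le> ennreal (A * (f * a powr (1 - g)) + B * (w * a))"
    unfolding A_def B_def by (intro ennreal_leI) (simp add: mult_ac)
  also have "\<dots> = ennreal A * (ennreal f * upow g a) + ennreal B * ennreal (w * a)"
    using True A B f w by (simp add: upow_def ennreal_plus ennreal_mult)
  finally show ?thesis unfolding A_def B_def .
next
  case False
  then have "ennreal f * upow g a = \<infinity>" using g f by (simp add: upow_def ennreal_mult_top)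
  then show ?thesis using g l by (simp add: ennreal_mult_top)
qed

lemma borel_measurable_upow[measurable]:
  assumes [measurable]: "a \<in> borel_measurable M"
  shows "(\<lambda>x. upow g (a x)) \<in> borel_measurable M"
  unfolding upow_def by measurable

text \<open>Hoelder's inequality for the factorisation
  f^(1/g) w^((g-1)/g) = (f a^(1-g))^(1/g) (w a)^((g-1)/g), obtained by integrating Young's
  inequality at the scale l = K / X.\<close>
lemma nn_integral_reverse_Hoelder:
  fixes f w a :: "'a \<Rightarrow> real" and g K X :: real
  assumes g: "1 < g"
    and [measurable]: "f \<in> borel_measurable M" "w \<in> borel_measurable M" "a \<in> borel_measurable M"
    and f_pos: "\<And>\<theta>. \<theta> \<in> space M \<Longrightarrow> 0 < f \<theta>" and w_pos: "\<And>\<theta>. \<theta> \<in> space M \<Longrightarrow> 0 < w \<theta>"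
    and K: "0 \<le> K" "ennreal K \<le> (\<integral>\<^sup>+\<theta>. ennreal (f \<theta> powr (1 / g) * w \<theta> powr ((g - 1) / g)) \<partial>M)"
    and X: "0 < X" "(\<integral>\<^sup>+\<theta>. ennreal (w \<theta> * a \<theta>) \<partial>M) \<le> ennreal X"
  shows "ennreal (K powr g * X powr (1 - g)) \<le> (\<integral>\<^sup>+\<theta>. ennreal (f \<theta>) * upow g (a \<theta>) \<partial>M)"
    (is "_ \<le> ?I")
proof (cases "K = 0")
  case True
  then show ?thesis by simp
next
  case False
  with K have K_pos: "0 < K" by simp
  define l where "l = K / X"
  have l: "0 < l" using K_pos X by (simp add: l_def)
  have "ennreal K \<le> (\<integral>\<^sup>+\<theta>. ennreal (l powr (1 - g) / g) * (ennreal (f \<theta>) * upow g (a \<theta>))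
      + ennreal ((g - 1) / g * l) * ennreal (w \<theta> * a \<theta>) \<partial>M)"
    using K(2) by (rule order_trans) (intro nn_integral_mono upow_Young_inequality g l f_pos w_pos)
  also have "\<dots> = ennreal (l powr (1 - g) / g) * ?I
      + ennreal ((g - 1) / g * l) * (\<integral>\<^sup>+\<theta>. ennreal (w \<theta> * a \<theta>) \<partial>M)"
    by (simp add: nn_integral_add nn_integral_cmult)
  also have "\<dots> \<le> ennreal (l powr (1 - g) / g) * ?I + ennreal ((g - 1) / g * l) * ennreal X"
    using X(2) by (intro add_left_mono mult_left_mono) auto
  also have "ennreal ((g - 1) / g * l) * ennreal X = ennreal ((g - 1) / g * K)"
    using g X K_pos by (simp add: l_def ennreal_mult[symmetric])
  finally have bound: "ennreal K \<le> ennreal (l powr (1 - g) / g) * ?I + ennreal ((g - 1) / g * K)" .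
  show ?thesis
  proof (cases "?I = \<infinity>")
    case True
    then show ?thesis by simp
  next
    case False
    then obtain i where i: "?I = ennreal i" "0 \<le> i" by (cases ?I) auto
    have "ennreal (l powr (1 - g) / g) * ?I = ennreal (l powr (1 - g) / g * i)"
      using g i by (subst ennreal_mult') auto
    with bound have "ennreal K \<le> ennreal (l powr (1 - g) / g * i + (g - 1) / g * K)"
      using g K_pos i by (simp add: ennreal_plus)
    then have "K \<le> l powr (1 - g) / g * i + (g - 1) / g * K"
      using g i K_pos by (subst (asm) ennreal_le_iff) auto
    then have "K \<le> l powr (1 - g) * i"
      using g by (simp add: field_simps)
    then have "K * l powr (g - 1) \<le> l powr (1 - g) * l powr (g - 1) * i"
      using l by (simp add: mult_right_mono mult_ac)
    also have "l powr (1 - g) * l powr (g - 1) = 1"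
      using l by (simp add: powr_add[symmetric])
    also have "K * l powr (g - 1) = exp (ln K + (g - 1) * ln (K / X))"
      using K_pos X by (simp add: l_def powr_def exp_add)
    also have "\<dots> = K powr g * X powr (1 - g)"
      using K_pos X by (simp add: powr_def ln_div exp_add[symmetric] algebra_simps)
    finally show ?thesis using i by (simp add: ennreal_leI)
  qed
qed

lemma nn_integral_reverse_Hoelder_upow:
  fixes f w a :: "'a \<Rightarrow> real" and g K B :: real
  assumes g: "1 < g"
    and [measurable]: "f \<in> borel_measurable M" "w \<in> borel_measurable M" "a \<in> borel_measurable M"
    and f_pos: "\<And>\<theta>. \<theta> \<in> space M \<Longrightarrow> 0 < f \<theta>" and w_pos: "\<And>\<theta>. \<theta> \<in> space M \<Longrightarrow> 0 < w \<theta>"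
    and K: "0 \<le> K" "ennreal K \<le> (\<integral>\<^sup>+\<theta>. ennreal (f \<theta> powr (1 / g) * w \<theta> powr ((g - 1) / g)) \<partial>M)"
    and B: "0 \<le> B" "(\<integral>\<^sup>+\<theta>. ennreal (w \<theta> * a \<theta>) \<partial>M) \<le> ennreal B"
  shows "ennreal (K powr g) * upow g B \<le> (\<integral>\<^sup>+\<theta>. ennreal (f \<theta>) * upow g (a \<theta>) \<partial>M)"
    (is "_ \<le> ?I")
proof -
  have bound: "ennreal (K powr g * X powr (1 - g)) \<le> ?I" if "0 < X" "B \<le> X" for X
    using B(2) that by (intro nn_integral_reverse_Hoelder[OF g _ _ _ f_pos w_pos K]) (auto intro: order_trans)
  show ?thesis
  proof (cases "0 < B \<or> K = 0")
    case True
    then show ?thesis using bound[of B] by (auto simp: upow_def ennreal_mult)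
  next
    case False
    with B K have B0: "B = 0" and K_pos: "0 < K" by auto
    have "?I = \<infinity>"
    proof (rule ccontr)
      assume "?I \<noteq> \<infinity>"
      then obtain i where i: "?I = ennreal i" "0 \<le> i" by (cases ?I) auto
      \<comment> \<open>B = 0 admits every X > 0 in the bound, and K^g X^(1-g) is unbounded as X tends to 0\<close>
      define X where "X = ((i + 1) / K powr g) powr (1 / (1 - g))"
      have X: "0 < X" using i K_pos by (simp add: X_def)
      have "K powr g * X powr (1 - g) = i + 1"
        using g i K_pos by (simp add: X_def powr_powr)
      then show False using bound[OF X] B0 X i by simp
    qed
    then show ?thesis by simp
  qed
qed

section \<open>Tails of discounted integrals\<close>

lemma nn_integral_cmult_le: "c * integral\<^sup>N M f \<le> (\<integral>\<^sup>+x. c * f x \<partial>M)"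
  unfolding nn_integral_def SUP_mult_left_ennreal
proof (rule SUP_least)
  fix g assume "g \<in> {g. simple_function M g \<and> g \<le> f}"
  then have "simple_function M (\<lambda>x. c * g x)" "(\<lambda>x. c * g x) \<le> (\<lambda>x. c * f x)"
    by (auto simp: le_fun_def mult_left_mono)
  then have "integral\<^sup>S M (\<lambda>x. c * g x) \<le> (SUP h \<in> {h. simple_function M h \<and> h \<le> (\<lambda>x. c * f x)}. integral\<^sup>S M h)"
    by (intro SUP_upper) auto
  then show "c * integral\<^sup>S M g \<le> (SUP h \<in> {h. simple_function M h \<and> h \<le> (\<lambda>x. c * f x)}. integral\<^sup>S M h)"
    using \<open>g \<in> _\<close> by simp
qed

lemma borel_measurable_indicator_Ici_mult:
  fixes G :: "real \<Rightarrow> real"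
  assumes G: "\<And>t. 0 \<le> t \<Longrightarrow> G integrable_on {0..t}"
  shows "(\<lambda>s. indicator {0..} s * G s) \<in> borel_measurable lebesgue"
proof (rule borel_measurable_LIMSEQ_real)
  fix m :: nat
  have "G \<in> borel_measurable (lebesgue_on {0..real m})"
    using G by (intro integrable_imp_measurable) simp
  then show "(\<lambda>s. indicator {0..real m} s * G s) \<in> borel_measurable lebesgue"
    by (subst (asm) borel_measurable_restrict_space_iff) auto
next
  fix s :: real
  obtain N :: nat where "s \<le> real N" using real_arch_simple by blast
  then have "\<forall>\<^sub>F m in sequentially. indicator {0..real m} s * G s = indicator {0..} s * G s"
    by (intro eventually_sequentiallyI[of N]) (auto simp: indicator_def elim: order_trans)
  then show "(\<lambda>m. indicator {0..real m} s * G s) \<longlonglongrightarrow> indicator {0..} s * G s"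
    by (rule tendsto_eventually)
qed

lemma nn_integral_lebesgue_on_eq_integral:
  fixes G :: "real \<Rightarrow> real"
  assumes G: "G integrable_on S" "\<And>s. s \<in> S \<Longrightarrow> 0 \<le> G s" and S: "S \<in> sets lebesgue"
  shows "(\<integral>\<^sup>+s. ennreal (G s) \<partial>lebesgue_on S) = ennreal (integral S G)"
proof -
  have "(\<integral>\<^sup>+s. ennreal (G s) \<partial>lebesgue_on S) = (\<integral>\<^sup>+s. ennreal (G s) * indicator S s \<partial>lborel)"
    using S by (simp add: nn_integral_restrict_space nn_integral_completion)
  also have "\<dots> = ennreal (integral S G)"
    using G by (intro nn_integral_has_integral_lebesgue') auto
  finally show ?thesis .
qed

lemmas borel_measurable_lebesgue_ident[measurable] = id_borel_measurable_lebesgue[unfolded id_def]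
lemmas borel_measurable_lebesgue_on_ident[measurable] = id_borel_measurable_lebesgue_on[unfolded id_def]

lemma nn_integral_tail_tendsto_0:
  fixes u :: "real \<Rightarrow> ennreal"
  assumes [measurable]: "u \<in> borel_measurable lebesgue" and finite: "(\<integral>\<^sup>+s. u s \<partial>lebesgue) < \<infinity>"
  shows "(\<lambda>n::nat. \<integral>\<^sup>+s\<in>{real n..}. u s \<partial>lebesgue) \<longlonglongrightarrow> 0"
proof -
  have [measurable]: "(\<lambda>s. u s * indicator {real n..} s) \<in> borel_measurable lebesgue" for n
    by measurable
  have dec: "decseq (\<lambda>n s. u s * indicator {real n..} s)"
    by (rule decseq_SucI) (simp add: le_fun_def split: split_indicator)
  have "(INF n. \<integral>\<^sup>+s\<in>{real n..}. u s \<partial>lebesgue) = (\<integral>\<^sup>+s. (INF n. u s * indicator {real n..} s) \<partial>lebesgue)"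
    using finite
    by (intro nn_integral_monotone_convergence_INF_decseq[symmetric, OF dec])
      (auto intro: le_less_trans[OF nn_integral_mono] split: split_indicator)
  also have "(\<lambda>s. INF n. u s * indicator {real n..} s) = (\<lambda>s. 0)"
  proof
    fix s :: real
    obtain n :: nat where "s < real n" using reals_Archimedean2 by blast
    then show "(INF n. u s * indicator {real n..} s) = 0"
      by (intro antisym INF_lower2[of n]) auto
  qed
  finally have "(INF n. \<integral>\<^sup>+s\<in>{real n..}. u s \<partial>lebesgue) = 0" by simp
  moreover have "decseq (\<lambda>n. \<integral>\<^sup>+s\<in>{real n..}. u s \<partial>lebesgue)"
    by (intro decseq_SucI nn_integral_mono) (simp split: split_indicator)
  ultimately show ?thesis using LIMSEQ_INF by metis
qed

lemma discounted_upow_unit_interval: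
  fixes G :: "real \<Rightarrow> real" and t X \<delta> \<gamma> :: real
  assumes \<gamma>: "1 < \<gamma>" and \<delta>: "0 \<le> \<delta>" and X: "0 < X"
    and G_int: "G integrable_on {t..t + 1}" and G_nonneg: "\<And>s. s \<in> {t..t + 1} \<Longrightarrow> 0 \<le> G s"
    and G_le: "integral {t..t + 1} G \<le> X"
  shows "ennreal (exp (- \<delta> * (t + 1)) * X powr (1 - \<gamma>))
    \<le> (\<integral>\<^sup>+s\<in>{t..t + 1}. ennreal (exp (- \<delta> * s)) * upow \<gamma> (G s) \<partial>lebesgue)"
proof -
  define K where "K = exp (- \<delta> * (t + 1) / \<gamma>)"
  have "ennreal (K powr \<gamma>) * upow \<gamma> X
      \<le> (\<integral>\<^sup>+s. ennreal (exp (- \<delta> * s)) * upow \<gamma> (G s) \<partial>lebesgue_on {t..t + 1})"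
  proof (rule nn_integral_reverse_Hoelder_upow[where w = "\<lambda>_. 1"])
    show "G \<in> borel_measurable (lebesgue_on {t..t + 1})"
      using G_int by (rule integrable_imp_measurable)
    show "(\<lambda>s. exp (- \<delta> * s)) \<in> borel_measurable (lebesgue_on {t..t + 1})"
      by measurable
    have "ennreal K = (\<integral>\<^sup>+s. ennreal K \<partial>lebesgue_on {t..t + 1})"
      by (simp add: emeasure_restrict_space)
    also have "\<dots> \<le> (\<integral>\<^sup>+s. ennreal (exp (- \<delta> * s) powr (1 / \<gamma>) * 1 powr ((\<gamma> - 1) / \<gamma>)) \<partial>lebesgue_on {t..t + 1})"
      using \<gamma> \<delta>
      by (intro nn_integral_mono ennreal_leI)
        (auto simp: K_def powr_def space_restrict_space intro!: divide_right_mono mult_left_mono)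
    finally show "ennreal K \<le> \<dots>" .
    have "(\<integral>\<^sup>+s. ennreal (1 * G s) \<partial>lebesgue_on {t..t + 1}) = ennreal (integral {t..t + 1} G)"
      using G_nonneg by (simp, subst nn_integral_lebesgue_on_eq_integral[OF G_int]) auto
    then show "(\<integral>\<^sup>+s. ennreal (1 * G s) \<partial>lebesgue_on {t..t + 1}) \<le> ennreal X"
      using G_le by (simp add: ennreal_leI)
  qed (use \<gamma> X in \<open>auto simp: K_def\<close>)
  then show ?thesis
    using \<gamma> X by (simp add: K_def upow_def powr_def ennreal_mult nn_integral_restrict_space)
qed

lemma discounted_remaining_powr_tendsto_0:
  fixes G :: "real \<Rightarrow> real" and X0 \<delta> \<gamma> :: real
  assumes \<gamma>: "1 < \<gamma>" and \<delta>: "0 < \<delta>"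
    and G_nonneg: "\<And>s. 0 \<le> s \<Longrightarrow> 0 \<le> G s"
    and G_int: "\<And>t. 0 \<le> t \<Longrightarrow> G integrable_on {0..t}"
    and remaining_pos: "\<And>t. 0 \<le> t \<Longrightarrow> integral {0..t} G < X0"
    and finite: "(\<integral>\<^sup>+s\<in>{0..}. ennreal (exp (- \<delta> * s)) * upow \<gamma> (G s) \<partial>lborel) < \<infinity>"
  shows "(\<lambda>n::nat. exp (- \<delta> * real n) * (X0 - integral {0..real n} G) powr (1 - \<gamma>)) \<longlonglongrightarrow> 0"
proof -
  define G0 where "G0 s = indicator {0..} s * G s" for s :: real
  define u where "u s = indicator {0..} s * (ennreal (exp (- \<delta> * s)) * upow \<gamma> (G0 s))" for s :: real
  have [measurable]: "G0 \<in> borel_measurable lebesgue"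
    unfolding G0_def using G_int by (rule borel_measurable_indicator_Ici_mult)
  have [measurable]: "u \<in> borel_measurable lebesgue"
    unfolding u_def by measurable
  have u_eq: "u s = ennreal (exp (- \<delta> * s)) * upow \<gamma> (G s) * indicator {0..} s" for s
    by (simp add: u_def G0_def split: split_indicator)
  define V where "V n = (\<integral>\<^sup>+s\<in>{real n..}. u s \<partial>lebesgue)" for n :: nat
  have u_fin: "(\<integral>\<^sup>+s. u s \<partial>lebesgue) < \<infinity>"
    using finite unfolding u_eq by (simp add: nn_integral_completion)
  have V_lim: "V \<longlonglongrightarrow> 0"
    unfolding V_def using u_fin by (rule nn_integral_tail_tendsto_0[rotated]) measurable
  have V_fin: "V n < \<infinity>" for n
  proof -
    have "V n \<le> (\<integral>\<^sup>+s. u s \<partial>lebesgue)"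
      unfolding V_def by (intro nn_integral_mono) (simp split: split_indicator)
    with u_fin show ?thesis by simp
  qed
  have bound: "exp (- \<delta> * real n) * (X0 - integral {0..real n} G) powr (1 - \<gamma>) \<le> exp \<delta> * enn2real (V n)"
    for n :: nat
  proof -
    define t where "t = real n"
    define X where "X = X0 - integral {0..t} G"
    have t: "0 \<le> t" and X: "0 < X" using remaining_pos by (auto simp: t_def X_def)
    have G_int1: "G integrable_on {t..t + 1}"
      using t by (intro integrable_subinterval_real[OF G_int[of "t + 1"]]) auto
    have "integral {0..t} G + integral {t..t + 1} G = integral {0..t + 1} G"
      using G_int[of "t + 1"] t by (intro Henstock_Kurzweil_Integration.integral_combine) auto
    then have "integral {t..t + 1} G \<le> X"
      using remaining_pos[of "t + 1"] t by (simp add: X_def)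
    then have "ennreal (exp (- \<delta> * (t + 1)) * X powr (1 - \<gamma>))
        \<le> (\<integral>\<^sup>+s\<in>{t..t + 1}. ennreal (exp (- \<delta> * s)) * upow \<gamma> (G s) \<partial>lebesgue)"
      using \<gamma> \<delta> X G_int1 G_nonneg t by (intro discounted_upow_unit_interval) auto
    also have "\<dots> \<le> V n"
      unfolding V_def t_def using t_def t
      by (intro nn_integral_mono) (auto simp: u_eq split: split_indicator)
    finally have "exp (- \<delta> * (t + 1)) * X powr (1 - \<gamma>) \<le> enn2real (V n)"
      using V_fin[of n] enn2real_mono by fastforce
    moreover have "exp (- \<delta> * t) = exp \<delta> * exp (- \<delta> * (t + 1))"
      by (simp add: mult_exp_exp algebra_simps)
    ultimately show ?thesis
      unfolding t_def[symmetric] X_def[symmetric] by (simp add: mult.assoc)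
  qed
  show ?thesis
  proof (rule tendsto_sandwich[OF _ _ tendsto_const])
    show "\<forall>\<^sub>F n in sequentially. 0 \<le> exp (- \<delta> * real n) * (X0 - integral {0..real n} G) powr (1 - \<gamma>)"
      by simp
    show "\<forall>\<^sub>F n in sequentially. exp (- \<delta> * real n) * (X0 - integral {0..real n} G) powr (1 - \<gamma>)
        \<le> exp \<delta> * enn2real (V n)"
      using bound by simp
    have "V \<longlonglongrightarrow> ennreal 0" using V_lim by simp
    then show "(\<lambda>n. exp \<delta> * enn2real (V n)) \<longlonglongrightarrow> 0"
      by (intro tendsto_mult_right_zero) (rule tendsto_enn2real, simp_all)
  qed
qed

section \<open>The scalar equation\<close>

lemma exp_powr_shift:
  fixes \<rho> lam \<gamma> t Y :: real
  assumes "0 \<le> Y"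
  shows "exp (- \<rho> * t) * (exp (lam * t) * Y) powr (1 - \<gamma>)
    = exp (- (\<rho> - lam * (1 - \<gamma>)) * t) * Y powr (1 - \<gamma>)"
  using assms by (cases "0 < Y") (simp_all add: powr_def ln_mult mult_exp_exp algebra_simps)

lemma upow_exp_shift:
  fixes \<rho> lam \<gamma> t Y :: real
  shows "ennreal (exp (- \<rho> * t)) * upow \<gamma> (exp (lam * t) * Y)
    = ennreal (exp (- (\<rho> - lam * (1 - \<gamma>)) * t)) * upow \<gamma> Y"
proof (cases "0 < Y")
  case True
  then show ?thesis
    using exp_powr_shift[of Y \<rho> t lam \<gamma>] by (simp add: upow_def ennreal_mult[symmetric])
next
  case False
  then show ?thesis by (simp add: upow_def zero_less_mult_iff ennreal_mult_top)
qed

lemma exp_times_tendsto_0: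
  fixes \<delta> C :: real
  assumes "0 < \<delta>"
  shows "(\<lambda>n::nat. C * exp (- \<delta> * real n)) \<longlonglongrightarrow> 0"
proof -
  have "(\<lambda>n::nat. C * exp (- \<delta>) ^ n) \<longlonglongrightarrow> 0"
    using assms by (intro tendsto_mult_right_zero LIMSEQ_power_zero) simp_all
  then show ?thesis by (simp add: exp_of_nat_mult[symmetric] mult.commute)
qed

text \<open>The alternative S t = exp (lam * t) * S0 is what the mild formula yields when the
  vector-valued integrand is not integrable, because integral then returns 0.\<close>
definition mild_scalar_solution :: "real \<Rightarrow> real \<Rightarrow> (real \<Rightarrow> real) \<Rightarrow> (real \<Rightarrow> real) \<Rightarrow> bool" where
  "mild_scalar_solution lam S0 B S \<longleftrightarrow> (\<forall>t\<ge>0. S t = exp (lam * t) * S0 \<or>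
     ((\<lambda>s. exp (- lam * s) * B s) integrable_on {0..t} \<and>
      S t = exp (lam * t) * (S0 - integral {0..t} (\<lambda>s. exp (- lam * s) * B s))))"

lemma mild_scalar_solution_le:
  assumes "mild_scalar_solution lam S0 B S" "\<And>s. 0 \<le> s \<Longrightarrow> 0 \<le> B s" "0 \<le> t"
  shows "S t \<le> exp (lam * t) * S0"
proof -
  have "(\<lambda>s. exp (- lam * s) * B s) integrable_on {0..t} \<Longrightarrow>
      0 \<le> integral {0..t} (\<lambda>s. exp (- lam * s) * B s)"
    using assms(2) by (intro integral_nonneg) auto
  then show ?thesis using assms(1,3) unfolding mild_scalar_solution_def by (auto simp: mult_left_mono)
qed

lemma discounted_powr_tendsto_0_lt1:
  fixes S B :: "real \<Rightarrow> real" and lam \<rho> \<gamma> S0 :: real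
  assumes \<gamma>: "\<gamma> < 1" and \<rho>: "lam * (1 - \<gamma>) < \<rho>"
    and S_pos: "\<And>t. 0 \<le> t \<Longrightarrow> 0 < S t"
    and B_nonneg: "\<And>s. 0 \<le> s \<Longrightarrow> 0 \<le> B s"
    and S_mild: "mild_scalar_solution lam S0 B S"
  shows "(\<lambda>n::nat. exp (- \<rho> * real n) * S (real n) powr (1 - \<gamma>)) \<longlonglongrightarrow> 0"
proof (rule tendsto_sandwich[OF _ _ tendsto_const])
  define \<delta> where "\<delta> = \<rho> - lam * (1 - \<gamma>)"
  note S_le = mild_scalar_solution_le[OF S_mild B_nonneg]
  have S0: "0 \<le> S0" using S_pos[of 0] S_le[of 0] by simp
  show "\<forall>\<^sub>F n in sequentially. 0 \<le> exp (- \<rho> * real n) * S (real n) powr (1 - \<gamma>)"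
    by simp
  have "exp (- \<rho> * real n) * S (real n) powr (1 - \<gamma>)
      \<le> exp (- \<rho> * real n) * (exp (lam * real n) * S0) powr (1 - \<gamma>)" for n :: nat
    using S_pos S_le \<gamma> by (intro mult_left_mono powr_mono2) (auto simp: less_imp_le)
  also have "exp (- \<rho> * real n) * (exp (lam * real n) * S0) powr (1 - \<gamma>)
      = S0 powr (1 - \<gamma>) * exp (- \<delta> * real n)" for n :: nat
    unfolding exp_powr_shift[OF S0] \<delta>_def by (rule mult.commute)
  finally show "\<forall>\<^sub>F n in sequentially. exp (- \<rho> * real n) * S (real n) powr (1 - \<gamma>)
      \<le> S0 powr (1 - \<gamma>) * exp (- \<delta> * real n)"
    by simp
  show "(\<lambda>n. S0 powr (1 - \<gamma>) * exp (- \<delta> * real n)) \<longlonglongrightarrow> 0"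
    using \<rho> by (intro exp_times_tendsto_0) (simp add: \<delta>_def)
qed

lemma mild_scalar_solution_recurrent:
  fixes S B :: "real \<Rightarrow> real" and lam S0 t :: real
  defines "G \<equiv> \<lambda>s. exp (- lam * s) * B s"
  assumes S_mild: "mild_scalar_solution lam S0 B S"
    and S_pos: "\<And>t. 0 \<le> t \<Longrightarrow> 0 < S t" and B_nonneg: "\<And>s. 0 \<le> s \<Longrightarrow> 0 \<le> B s"
    and recurrent: "\<And>N. \<exists>n\<ge>N. S (real n) \<noteq> exp (lam * real n) * S0"
    and t: "0 \<le> t"
  shows "G integrable_on {0..t}" and "integral {0..t} G < S0"
    and "exp (lam * t) * (S0 - integral {0..t} G) \<le> S t"
proof -
  have S_mild: "S t = exp (lam * t) * S0 \<or>
      (G integrable_on {0..t} \<and> S t = exp (lam * t) * (S0 - integral {0..t} G))" if "0 \<le> t" for t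
    using S_mild that unfolding mild_scalar_solution_def G_def by blast
  obtain N :: nat where "t \<le> real N" using real_arch_simple by blast
  moreover obtain n where "N \<le> n" "S (real n) \<noteq> exp (lam * real n) * S0" using recurrent by blast
  ultimately have n: "t \<le> real n" "G integrable_on {0..real n}"
    "S (real n) = exp (lam * real n) * (S0 - integral {0..real n} G)"
    using S_mild[of "real n"] by auto
  have G_nonneg: "\<And>s. s \<in> {0..real n} \<Longrightarrow> 0 \<le> G s"
    using B_nonneg by (simp add: G_def)
  have "{0..t} \<subseteq> {0..real n}" using n by auto
  with n(2) show G_int: "G integrable_on {0..t}" by (rule integrable_subinterval_real)
  have "integral {0..t} G \<le> integral {0..real n} G"
    using n t G_int G_nonneg by (intro integral_subset_le) auto
  also have "integral {0..real n} G < S0"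
    using S_pos[of "real n"] n(3) by (simp add: zero_less_mult_iff)
  finally show "integral {0..t} G < S0" .
  have "0 \<le> integral {0..t} G" using G_int G_nonneg n(1) by (intro integral_nonneg) auto
  then have "exp (lam * t) * (S0 - integral {0..t} G) \<le> exp (lam * t) * S0" by simp
  then show "exp (lam * t) * (S0 - integral {0..t} G) \<le> S t" using S_mild[OF t] by auto
qed

lemma discounted_powr_tendsto_0_gt1:
  fixes S B :: "real \<Rightarrow> real" and lam \<rho> \<gamma> S0 :: real
  assumes \<gamma>: "1 < \<gamma>" and \<rho>: "lam * (1 - \<gamma>) < \<rho>"
    and S_pos: "\<And>t. 0 \<le> t \<Longrightarrow> 0 < S t"
    and B_nonneg: "\<And>s. 0 \<le> s \<Longrightarrow> 0 \<le> B s"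
    and S_mild: "mild_scalar_solution lam S0 B S"
    and finite: "(\<integral>\<^sup>+s\<in>{0..}. ennreal (exp (- \<rho> * s)) * upow \<gamma> (B s) \<partial>lborel) < \<infinity>"
  shows "(\<lambda>n::nat. exp (- \<rho> * real n) * S (real n) powr (1 - \<gamma>)) \<longlonglongrightarrow> 0"
proof -
  define \<delta> where "\<delta> = \<rho> - lam * (1 - \<gamma>)"
  define G where "G = (\<lambda>s. exp (- lam * s) * B s)"
  have \<delta>: "0 < \<delta>" using \<rho> by (simp add: \<delta>_def)
  show ?thesis
  proof (cases "\<exists>N. \<forall>n\<ge>N. S (real n) = exp (lam * real n) * S0")
    case True
    then obtain N where N: "\<And>n. N \<le> n \<Longrightarrow> S (real n) = exp (lam * real n) * S0" by blast
    have S0: "0 \<le> S0" using S_pos[of "real N"] N[of N] by (simp add: zero_less_mult_iff)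
    have "\<forall>\<^sub>F n in sequentially. S0 powr (1 - \<gamma>) * exp (- \<delta> * real n)
        = exp (- \<rho> * real n) * S (real n) powr (1 - \<gamma>)"
    proof (rule eventually_sequentiallyI[of N])
      fix n assume n: "N \<le> n"
      show "S0 powr (1 - \<gamma>) * exp (- \<delta> * real n) = exp (- \<rho> * real n) * S (real n) powr (1 - \<gamma>)"
        unfolding N[OF n] exp_powr_shift[OF S0] \<delta>_def by (rule mult.commute)
    qed
    then show ?thesis by (rule Lim_transform_eventually[OF exp_times_tendsto_0[OF \<delta>]])
  next
    case False
    then have recurrent: "\<And>N. \<exists>n\<ge>N. S (real n) \<noteq> exp (lam * real n) * S0" by auto
    note recurrent_facts = mild_scalar_solution_recurrent[OF S_mild S_pos B_nonneg recurrent, folded G_def]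
    note G_int = recurrent_facts(1) and remaining_pos = recurrent_facts(2) and S_ge = recurrent_facts(3)
    have G_nonneg: "\<And>s. 0 \<le> s \<Longrightarrow> 0 \<le> G s"
      using B_nonneg by (simp add: G_def)
    have "(\<integral>\<^sup>+s\<in>{0..}. ennreal (exp (- \<delta> * s)) * upow \<gamma> (G s) \<partial>lborel)
        = (\<integral>\<^sup>+s\<in>{0..}. ennreal (exp (- \<rho> * s)) * upow \<gamma> (B s) \<partial>lborel)"
    proof (rule nn_integral_cong)
      fix s :: real
      have "B s = exp (lam * s) * G s" by (simp add: G_def exp_minus)
      then show "ennreal (exp (- \<delta> * s)) * upow \<gamma> (G s) * indicator {0..} s
          = ennreal (exp (- \<rho> * s)) * upow \<gamma> (B s) * indicator {0..} s"
        using upow_exp_shift[where \<rho> = \<rho> and lam = lam and \<gamma> = \<gamma> and t = s and Y = "G s"]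
        by (simp add: \<delta>_def)
    qed
    with finite have lim: "(\<lambda>n::nat. exp (- \<delta> * real n) * (S0 - integral {0..real n} G) powr (1 - \<gamma>)) \<longlonglongrightarrow> 0"
      by (intro discounted_remaining_powr_tendsto_0[OF \<gamma> \<delta> G_nonneg G_int remaining_pos]) auto
    have bound: "exp (- \<rho> * real n) * S (real n) powr (1 - \<gamma>)
        \<le> exp (- \<delta> * real n) * (S0 - integral {0..real n} G) powr (1 - \<gamma>)" for n :: nat
    proof -
      have X: "0 < S0 - integral {0..real n} G" using remaining_pos[of "real n"] by simp
      then have "S (real n) powr (1 - \<gamma>) \<le> (exp (lam * real n) * (S0 - integral {0..real n} G)) powr (1 - \<gamma>)"
        using \<gamma> S_ge[of "real n"] by (intro powr_mono2') auto
      then have "exp (- \<rho> * real n) * S (real n) powr (1 - \<gamma>)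
          \<le> exp (- \<rho> * real n) * (exp (lam * real n) * (S0 - integral {0..real n} G)) powr (1 - \<gamma>)"
        by simp
      also have "\<dots> = exp (- \<delta> * real n) * (S0 - integral {0..real n} G) powr (1 - \<gamma>)"
        unfolding exp_powr_shift[OF less_imp_le[OF X]] \<delta>_def ..
      finally show ?thesis .
    qed
    show ?thesis
      by (rule tendsto_sandwich[OF _ _ tendsto_const lim]) (use bound in auto)
  qed
qed

section \<open>The control problem\<close>

lemma eigenfunctional_mild:
  fixes T :: "real \<Rightarrow> 'x::banach \<Rightarrow> 'x" and b :: "'x \<Rightarrow> real"
  assumes b: "bounded_linear b" and eig: "\<And>t y. 0 \<le> t \<Longrightarrow> b (T t y) = exp (lam * t) * b y"
  shows "mild_scalar_solution lam (b x0) (\<lambda>s. b (Nop (c s))) (\<lambda>t. b (mild T Nop x0 c t))"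
  unfolding mild_scalar_solution_def
proof (intro allI impI)
  fix t :: real assume t: "0 \<le> t"
  show "b (mild T Nop x0 c t) = exp (lam * t) * b x0 \<or>
    ((\<lambda>s. exp (- lam * s) * b (Nop (c s))) integrable_on {0..t} \<and>
     b (mild T Nop x0 c t) = exp (lam * t) * (b x0 - integral {0..t} (\<lambda>s. exp (- lam * s) * b (Nop (c s)))))"
  proof (cases "(\<lambda>s. T (t - s) (Nop (c s))) integrable_on {0..t}")
    case False
    then show ?thesis using eig[OF t] by (simp add: mild_def not_integrable_integral)
  next
    case True
    define G where "G = (\<lambda>s. exp (- lam * s) * b (Nop (c s)))"
    have b_integrand: "b (T (t - s) (Nop (c s))) = exp (lam * t) * G s" if "s \<in> {0..t}" for s
      using eig[of "t - s"] that by (simp add: G_def mult_exp_exp right_diff_distrib)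
    have "(\<lambda>s. b (T (t - s) (Nop (c s)))) integrable_on {0..t}"
      using integrable_linear[OF True b] by (simp add: o_def)
    then have "(\<lambda>s. exp (lam * t) * G s) integrable_on {0..t}"
      by (rule integrable_eq) (simp add: b_integrand)
    then have G_int: "G integrable_on {0..t}" by simp
    have "b (integral {0..t} (\<lambda>s. T (t - s) (Nop (c s)))) = integral {0..t} (\<lambda>s. b (T (t - s) (Nop (c s))))"
      using integral_linear[OF True b] by (simp add: o_def)
    also have "\<dots> = integral {0..t} (\<lambda>s. exp (lam * t) * G s)"
      by (rule integral_cong) (simp add: b_integrand)
    also have "\<dots> = exp (lam * t) * integral {0..t} G"
      using integral_cmul[of "{0..t}" "exp (lam * t)" G] by simp
    finally have "b (mild T Nop x0 c t) = exp (lam * t) * (b x0 - integral {0..t} G)"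
      using eig[OF t] b by (simp add: mild_def bounded_linear.linear linear_diff algebra_simps)
    then show ?thesis using G_int by (simp add: G_def)
  qed
qed

lemma qe_AE: "qe k M P \<Longrightarrow> AE \<theta> in M. P \<theta>"
  by (cases k) (auto simp: qe_def intro: AE_I2)

lemma qe_mp:
  assumes "qe k M P" "qe k M Q" "\<And>\<theta>. \<theta> \<in> space M \<Longrightarrow> P \<theta> \<Longrightarrow> Q \<theta> \<Longrightarrow> R \<theta>"
  shows "qe k M R"
proof (cases k)
  case Lp
  then have "AE \<theta> in M. P \<theta>" "AE \<theta> in M. Q \<theta>" using assms by (auto simp: qe_def)
  then have "AE \<theta> in M. R \<theta>" using AE_space by eventually_elim (use assms(3) in auto)
  then show ?thesis using Lp by (simp add: qe_def)
next
  case Cont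
  then show ?thesis using assms by (auto simp: qe_def)
qed

lemma borel_measurable_rep:
  assumes "is_realization k M rep"
  shows "rep x \<in> borel_measurable M"
proof (cases k)
  case Lp
  then show ?thesis using assms by (auto simp: is_realization_def)
next
  case Cont
  then have "continuous_on (space M) (rep x)" "sets M = sets (restrict_space borel (space M))"
    using assms by (auto simp: is_realization_def)
  then show ?thesis
    using borel_measurable_continuous_on_restrict measurable_cong_sets by blast
qed

lemma Xstar_pp_nonneg:
  assumes "b \<in> Xstar_pp k M rep" "x \<in> Xplus k M rep"
  shows "0 \<le> b x"
  using assms linear_0[of b] by (cases "x = 0") (auto simp: Xstar_pp_def bounded_linear.linear intro: less_imp_le)

lemma multiplication_operator_Xplus:
  assumes N: "\<forall>z. qe k M (\<lambda>\<theta>. rep (Nop z) \<theta> = eta \<theta> * rep z \<theta>)"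
    and eta: "\<forall>\<theta>\<in>space M. 0 < eta \<theta>" and x: "x \<in> Xplus k M rep"
  shows "Nop x \<in> Xplus k M rep"
proof -
  have "qe k M (\<lambda>\<theta>. 0 \<le> rep x \<theta>)" using x by (simp add: Xplus_def)
  with N[rule_format, of x] have "qe k M (\<lambda>\<theta>. 0 \<le> rep (Nop x) \<theta>)"
    by (rule qe_mp) (use eta in auto)
  then show ?thesis by (simp add: Xplus_def)
qed

lemma functional_reverse_Hoelder:
  fixes rep :: "'x::real_normed_vector \<Rightarrow> 'd::metric_space \<Rightarrow> real"
  assumes X: "is_realization k M rep" and \<gamma>: "1 < \<gamma>"
    and N: "\<forall>z. qe k M (\<lambda>\<theta>. rep (Nop z) \<theta> = eta \<theta> * rep z \<theta>)"
    and eta: "eta \<in> borel_measurable M" "\<forall>\<theta>\<in>space M. 0 < eta \<theta>"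
    and f: "f \<in> borel_measurable M" "\<forall>\<theta>\<in>space M. 0 < f \<theta>"
    and beta: "beta \<in> borel_measurable M" "\<forall>\<theta>\<in>space M. 0 < beta \<theta>"
    and b: "integrable M (\<lambda>\<theta>. rep (Nop y) \<theta> * beta \<theta>)" "b (Nop y) = (\<integral>\<theta>. rep (Nop y) \<theta> * beta \<theta> \<partial>M)"
    and K: "0 \<le> K" "ennreal K \<le> (\<integral>\<^sup>+\<theta>. ennreal (f \<theta> powr (1 / \<gamma>) * (eta \<theta> * beta \<theta>) powr ((\<gamma> - 1) / \<gamma>)) \<partial>M)"
    and y: "y \<in> Xplus k M rep"
  shows "ennreal (K powr \<gamma>) * upow \<gamma> (b (Nop y)) \<le> (\<integral>\<^sup>+\<theta>. ennreal (f \<theta>) * upow \<gamma> (rep y \<theta>) \<partial>M)"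
proof (rule nn_integral_reverse_Hoelder_upow[where w = "\<lambda>\<theta>. eta \<theta> * beta \<theta>"])
  note [measurable] = borel_measurable_rep[OF X] eta(1) f(1) beta(1)
  have same_AE: "AE \<theta> in M. rep (Nop y) \<theta> * beta \<theta> = eta \<theta> * beta \<theta> * rep y \<theta>"
    using qe_AE[OF N[rule_format, of y]] by eventually_elim simp
  have "AE \<theta> in M. 0 \<le> rep y \<theta>"
    using y by (intro qe_AE) (simp add: Xplus_def)
  then have nonneg_AE: "AE \<theta> in M. 0 \<le> eta \<theta> * beta \<theta> * rep y \<theta>"
    using AE_space
    by eventually_elim (use eta(2) beta(2) in \<open>intro mult_nonneg_nonneg, auto intro: less_imp_le\<close>)
  have "b (Nop y) = (\<integral>\<theta>. eta \<theta> * beta \<theta> * rep y \<theta> \<partial>M)"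
    using b(2) same_AE by (simp add: integral_cong_AE)
  moreover have "integrable M (\<lambda>\<theta>. eta \<theta> * beta \<theta> * rep y \<theta>)"
    by (rule integrable_cong_AE_imp[OF b(1) _ same_AE]) measurable
  ultimately show "(\<integral>\<^sup>+\<theta>. ennreal (eta \<theta> * beta \<theta> * rep y \<theta>) \<partial>M) \<le> ennreal (b (Nop y))"
    and "0 \<le> b (Nop y)"
    using nonneg_AE by (simp_all add: nn_integral_eq_integral integral_nonneg_AE)
qed (use \<gamma> eta f beta K in \<open>auto simp: borel_measurable_rep[OF X]\<close>)

lemma Jfun_finite_imp_discounted_upow_finite:
  fixes rep :: "'x::real_normed_vector \<Rightarrow> 'd::metric_space \<Rightarrow> real" and c :: "real \<Rightarrow> 'x"
  assumes X: "is_realization k M rep" and \<gamma>: "1 < \<gamma>"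
    and N: "\<forall>z. qe k M (\<lambda>\<theta>. rep (Nop z) \<theta> = eta \<theta> * rep z \<theta>)"
    and eta: "eta \<in> borel_measurable M" "\<forall>\<theta>\<in>space M. 0 < eta \<theta>"
    and f: "f \<in> borel_measurable M" "\<forall>\<theta>\<in>space M. 0 < f \<theta>"
    and beta: "beta \<in> borel_measurable M" "\<forall>\<theta>\<in>space M. 0 < beta \<theta>"
    and b: "\<forall>x. integrable M (\<lambda>\<theta>. rep x \<theta> * beta \<theta>) \<and> b x = (\<integral>\<theta>. rep x \<theta> * beta \<theta> \<partial>M)"
    and K_nonzero: "(\<integral>\<theta>. f \<theta> powr (1 / \<gamma>) * (eta \<theta> * beta \<theta>) powr ((\<gamma> - 1) / \<gamma>) \<partial>M) \<noteq> 0"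
    and c: "\<And>s. 0 \<le> s \<Longrightarrow> c s \<in> Xplus k M rep"
    and J: "- \<infinity> < Jfun M rep f \<rho> \<gamma> c"
  shows "(\<integral>\<^sup>+s\<in>{0..}. ennreal (exp (- \<rho> * s)) * upow \<gamma> (b (Nop (c s))) \<partial>lborel) < \<infinity>"
proof -
  define K where "K = (\<integral>\<theta>. f \<theta> powr (1 / \<gamma>) * (eta \<theta> * beta \<theta>) powr ((\<gamma> - 1) / \<gamma>) \<partial>M)"
  define \<kappa> where "\<kappa> = K powr \<gamma> / (\<gamma> - 1)"
  define \<Phi> where "\<Phi> s = (\<integral>\<^sup>+\<theta>. ennreal (exp (- \<rho> * s) * f \<theta> / \<bar>1 - \<gamma>\<bar>) * upow \<gamma> (rep (c s) \<theta>) \<partial>M)" for s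
  note [measurable] = borel_measurable_rep[OF X] eta(1) f(1) beta(1)
  have "K = enn2real (\<integral>\<^sup>+\<theta>. ennreal (f \<theta> powr (1 / \<gamma>) * (eta \<theta> * beta \<theta>) powr ((\<gamma> - 1) / \<gamma>)) \<partial>M)"
    unfolding K_def by (rule integral_eq_nn_integral) auto
  then have K: "0 \<le> K" "ennreal K \<le> (\<integral>\<^sup>+\<theta>. ennreal (f \<theta> powr (1 / \<gamma>) * (eta \<theta> * beta \<theta>) powr ((\<gamma> - 1) / \<gamma>)) \<partial>M)"
    by (auto simp: ennreal_enn2real_if)
  then have \<kappa>: "0 < \<kappa>" using K_nonzero \<gamma> by (simp add: \<kappa>_def K_def)
  have \<Phi>_finite: "(\<integral>\<^sup>+s\<in>{0..}. \<Phi> s \<partial>lborel) < \<infinity>"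
    using J \<gamma> by (auto simp: Jfun_def \<Phi>_def less_top)
  have pointwise: "ennreal \<kappa> * (ennreal (exp (- \<rho> * s)) * upow \<gamma> (b (Nop (c s)))) \<le> \<Phi> s"
    if s: "0 \<le> s" for s
  proof -
    have "\<Phi> s = (\<integral>\<^sup>+\<theta>. ennreal (exp (- \<rho> * s) / (\<gamma> - 1)) * (ennreal (f \<theta>) * upow \<gamma> (rep (c s) \<theta>)) \<partial>M)"
      unfolding \<Phi>_def using \<gamma> f(2)
      by (intro nn_integral_cong) (simp add: ennreal_mult'[symmetric] mult.assoc[symmetric])
    also have "\<dots> = ennreal (exp (- \<rho> * s) / (\<gamma> - 1)) * (\<integral>\<^sup>+\<theta>. ennreal (f \<theta>) * upow \<gamma> (rep (c s) \<theta>) \<partial>M)"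
      by (rule nn_integral_cmult) measurable
    also have "\<dots> \<ge> ennreal (exp (- \<rho> * s) / (\<gamma> - 1)) * (ennreal (K powr \<gamma>) * upow \<gamma> (b (Nop (c s))))"
      using b by (intro mult_left_mono functional_reverse_Hoelder[OF X \<gamma> N eta f beta _ _ K c[OF s]]) auto
    also have "ennreal (exp (- \<rho> * s) / (\<gamma> - 1)) * (ennreal (K powr \<gamma>) * upow \<gamma> (b (Nop (c s))))
        = ennreal (exp (- \<rho> * s) / (\<gamma> - 1) * K powr \<gamma>) * upow \<gamma> (b (Nop (c s)))"
      using \<gamma> by (subst ennreal_mult') (simp_all add: mult.assoc)
    also have "exp (- \<rho> * s) / (\<gamma> - 1) * K powr \<gamma> = \<kappa> * exp (- \<rho> * s)"
      by (simp add: \<kappa>_def)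
    also have "ennreal (\<kappa> * exp (- \<rho> * s)) * upow \<gamma> (b (Nop (c s)))
        = ennreal \<kappa> * (ennreal (exp (- \<rho> * s)) * upow \<gamma> (b (Nop (c s))))"
      using \<kappa> by (subst ennreal_mult') (simp_all add: mult.assoc)
    finally show ?thesis .
  qed
  have "ennreal \<kappa> * (\<integral>\<^sup>+s\<in>{0..}. ennreal (exp (- \<rho> * s)) * upow \<gamma> (b (Nop (c s))) \<partial>lborel)
      \<le> (\<integral>\<^sup>+s. ennreal \<kappa> * (ennreal (exp (- \<rho> * s)) * upow \<gamma> (b (Nop (c s))) * indicator {0..} s) \<partial>lborel)"
    by (rule nn_integral_cmult_le)
  also have "\<dots> \<le> (\<integral>\<^sup>+s\<in>{0..}. \<Phi> s \<partial>lborel)"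
    using pointwise by (intro nn_integral_mono) (auto simp: mult.assoc[symmetric] split: split_indicator)
  finally have "ennreal \<kappa> * (\<integral>\<^sup>+s\<in>{0..}. ennreal (exp (- \<rho> * s)) * upow \<gamma> (b (Nop (c s))) \<partial>lborel) < \<infinity>"
    using \<Phi>_finite by (rule le_less_trans)
  then show ?thesis
    using \<kappa> by (auto simp: ennreal_mult_less_top)
qed

theorem lemma3p8:
  fixes k :: space_kind and M :: "'d::metric_space measure"
    and rep :: "'x::banach \<Rightarrow> 'd \<Rightarrow> real"
    and DL :: "'x set" and L :: "'x \<Rightarrow> 'x" and T :: "real \<Rightarrow> 'x \<Rightarrow> 'x"
    and Nop :: "'x \<Rightarrow> 'x" and b0 :: "'x \<Rightarrow> real"
    and beta eta f :: "'d \<Rightarrow> real" and lam0 \<rho> \<gamma> :: real and x0 :: 'x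
  assumes X: "is_realization k M rep"
    and gen: "generates_C0 DL L T"
    and closed_dense: "closure DL = UNIV" "closed {(x, L x) | x. x \<in> DL}"
    and pos: "\<forall>t\<ge>0. \<forall>x \<in> Xplus k M rep - {0}. T t x \<in> Xplus k M rep - {0}"
    and N: "\<forall>z. qe k M (\<lambda>\<theta>. rep (Nop z) \<theta> = eta \<theta> * rep z \<theta>)"
    and eta: "eta \<in> borel_measurable M" "\<forall>\<theta>\<in>space M. 0 < eta \<theta>"
    and f: "f \<in> borel_measurable M" "\<forall>\<theta>\<in>space M. 0 < f \<theta>"
    and b0: "b0 \<in> Xstar_pp k M rep" "\<forall>x\<in>DL. b0 (L x) = lam0 * b0 x"
    and dens: "beta \<in> borel_measurable M" "\<forall>\<theta>\<in>space M. 0 < beta \<theta>"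
      "\<forall>x. integrable M (\<lambda>\<theta>. rep x \<theta> * beta \<theta>) \<and> b0 x = (\<integral>\<theta>. rep x \<theta> * beta \<theta> \<partial>M)"
    and gam: "0 < \<gamma>" "\<gamma> \<noteq> 1"
    and rho: "0 < \<rho>" "lam0 * (1 - \<gamma>) < \<rho>"
    and gam_gt1: "1 < \<gamma> \<longrightarrow> (\<exists>C. AE \<theta> in M. beta \<theta> powr (1 - \<gamma>) / f \<theta> \<le> C)"
    and Ccase: "k = Cont \<longrightarrow> continuous_on (space M) beta \<and> continuous_on (space M) eta \<and>
                             continuous_on (space M) f"
    and Lpcase: "\<forall>p. k = Lp p \<longrightarrow>
        (\<exists>C. AE \<theta> in M. eta \<theta> \<le> C) \<and> (\<exists>C. AE \<theta> in M. f \<theta> \<le> C) \<and>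
        integrable M (\<lambda>\<theta>. f \<theta> powr (1 / \<gamma>) * (eta \<theta> * beta \<theta>) powr ((\<gamma> - 1) / \<gamma>)) \<and>
        integrable M (\<lambda>\<theta>. (f \<theta> / (eta \<theta> * beta \<theta>)) powr (p / \<gamma>))"
    and x0: "0 < b0 x0"
  shows "\<forall>c \<in> adm k M rep T Nop b0 x0. - \<infinity> < Jfun M rep f \<rho> \<gamma> c \<longrightarrow>
           ((\<lambda>n::nat. exp (- \<rho> * real n) *
               vfun (alpha M f eta beta \<rho> lam0 \<gamma>) \<gamma> (b0 (mild T Nop x0 c (real n)))) \<longlongrightarrow> 0) sequentially"
proof (intro ballI impI)
  \<comment> \<open>Not needed: pos, closed_dense(2), rho(1), gam_gt1, Ccase, Lpcase and x0. Positivity of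
    <x(t), b0> is part of admissibility, and if the integral in alpha does not exist it is 0.\<close>
  fix c assume c: "c \<in> adm k M rep T Nop b0 x0" and J: "- \<infinity> < Jfun M rep f \<rho> \<gamma> c"
  interpret c0_generator DL L T using gen by (rule c0_generator.intro)
  define S where "S t = b0 (mild T Nop x0 c t)" for t
  define B where "B s = b0 (Nop (c s))" for s
  have b0_lin: "bounded_linear b0" using b0(1) by (simp add: Xstar_pp_def)
  have c_pos: "\<And>s. 0 \<le> s \<Longrightarrow> c s \<in> Xplus k M rep" and S_pos: "\<And>t. 0 \<le> t \<Longrightarrow> 0 < S t"
    using c by (auto simp: adm_def S_def)
  have B_nonneg: "\<And>s. 0 \<le> s \<Longrightarrow> 0 \<le> B s"
    unfolding B_def using Xstar_pp_nonneg[OF b0(1)] multiplication_operator_Xplus[OF N eta(2)] c_pos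
    by blast
  have S_mild: "mild_scalar_solution lam0 (b0 x0) B S"
    unfolding S_def B_def
    by (rule eigenfunctional_mild[OF b0_lin eigenfunctional_T[OF b0_lin _ closed_dense(1)]])
      (use b0(2) in auto)
  define \<alpha> where "\<alpha> = alpha M f eta beta \<rho> lam0 \<gamma>"
  have decay: "(\<lambda>n::nat. exp (- \<rho> * real n) * S (real n) powr (1 - \<gamma>)) \<longlonglongrightarrow> 0" if "\<alpha> \<noteq> 0"
  proof (cases "\<gamma> < 1")
    case True
    then show ?thesis
      using rho(2) S_pos B_nonneg S_mild by (rule discounted_powr_tendsto_0_lt1)
  next
    case False
    with gam have \<gamma>: "1 < \<gamma>" by simp
    have "(\<integral>\<theta>. f \<theta> powr (1 / \<gamma>) * (eta \<theta> * beta \<theta>) powr ((\<gamma> - 1) / \<gamma>) \<partial>M) \<noteq> 0"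
      using that by (auto simp: \<alpha>_def alpha_def)
    then have "(\<integral>\<^sup>+s\<in>{0..}. ennreal (exp (- \<rho> * s)) * upow \<gamma> (B s) \<partial>lborel) < \<infinity>"
      unfolding B_def
      by (intro Jfun_finite_imp_discounted_upow_finite[OF X \<gamma> N eta f dens(1,2) dens(3)] c_pos J)
    with \<gamma> rho(2) S_pos B_nonneg S_mild show ?thesis by (rule discounted_powr_tendsto_0_gt1)
  qed
  have "(\<lambda>n::nat. \<alpha> / (1 - \<gamma>) * (exp (- \<rho> * real n) * S (real n) powr (1 - \<gamma>))) \<longlonglongrightarrow> 0"
    using tendsto_mult_right_zero[OF decay, of "\<alpha> / (1 - \<gamma>)"] by (cases "\<alpha> = 0") simp_all
  then show "(\<lambda>n::nat. exp (- \<rho> * real n) *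
      vfun (alpha M f eta beta \<rho> lam0 \<gamma>) \<gamma> (b0 (mild T Nop x0 c (real n)))) \<longlonglongrightarrow> 0"
    unfolding vfun_def S_def[symmetric] \<alpha>_def[symmetric] by (simp add: mult_ac)
qed

end
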